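(* Let $(\xi_j)_{j\ge 0}$ be independent, identically distributed random variables taking values in $\{-1,0,1\}$ with $\max_{x\in\{-1,0,1\}} \mathbb{P}(\xi_0 = x) < \frac{1}{\sqrt{3}}$, and for $n\ge 1$ let $P(z):=\sum_{j=0}^n \xi_j z^j$. There exists a constant $C>0$ (depending only on the distribution of $\xi_0$) such that for every $n\ge 1$, if $\alpha\in\mathbb{C}$ satisfies $\alpha^k = 1$ for some integer $k\ge 1$, then \[\mathbb{P}(\alpha\text{ is a root of } P')\le \left(\frac{C}{\lfloor n/k\rfloor}\right)^{\frac{3\deg(\alpha)}{2}}.\]
   Context: $P'$ is the derivative of $P$. For an algebraic integer $\alpha$, $\deg(\alpha)$ denotes the degree of its minimal polynomial over $\mathbb{Q}$. *)

theory Defs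
  imports "HOL-Probability.Probability" "HOL-Computational_Algebra.Polynomial"
begin

definition alg_deg :: "complex \<Rightarrow> nat" where
  "alg_deg \<alpha> = (LEAST d. \<exists>q :: rat poly. q \<noteq> 0 \<and> degree q = d \<and>
                          poly (map_poly of_rat q) \<alpha> = 0)"

definition rand_poly :: "nat \<Rightarrow> (nat \<Rightarrow> int) \<Rightarrow> complex poly" where
  "rand_poly n xi = (\<Sum>j\<le>n. monom (of_int (xi j)) j)"

end

theory Submission
  imports Defs
begin

text \<open>
  Write \<open>m = \<lfloor>n/k\<rfloor>\<close> and \<open>d = deg \<alpha>\<close>. Since \<open>\<alpha>\<^sup>k = 1\<close>, the value \<open>P'(\<alpha>)\<close> equals
  \<open>\<Sum>\<^sub>r\<^sub><\<^sub>k S\<^sub>r \<alpha>\<^sup>r\<close>, where \<open>S\<^sub>r\<close> is the sum of \<open>j \<xi>\<^sub>j\<close> over the indices \<open>j \<in> [1, n]\<close>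
  with \<open>j - 1 \<equiv> r (mod k)\<close>. The powers \<open>1, \<alpha>, \<dots>, \<alpha>\<^sup>d\<^sup>-\<^sup>1\<close> are linearly independent
  over \<open>\<rat>\<close>, so once the coefficients outside the first \<open>d\<close> residue classes are fixed, the
  event \<open>P'(\<alpha>) = 0\<close> determines each of \<open>S\<^sub>0, \<dots>, S\<^sub>d\<^sub>-\<^sub>1\<close>; as the classes are independent,
  its probability is at most the product of the largest atoms of these \<open>d\<close> sums.

  Each class contains an arithmetic progression of length \<open>m\<close> and difference \<open>k\<close>. The
  characteristic function of \<open>\<xi>\<^sub>0\<close> satisfies \<open>|\<phi>(t)| \<le> exp (-\<gamma> sin\<^sup>2 t)\<close> with
  \<open>\<gamma> > 0\<close> because \<open>\<xi>\<^sub>0\<close> is not constant, so the characteristic function of \<open>S\<^sub>r\<close> at \<open>\<theta>\<close>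
  is tiny unless \<open>\<theta> k\<close> lies within about \<open>m\<^sup>-\<^sup>3\<^sup>/\<^sup>2\<close> of \<open>\<pi> \<int>\<close>. Discrete Fourier inversion
  (Halasz's method) turns this into the bound \<open>K m\<^sup>-\<^sup>3\<^sup>/\<^sup>2\<close> for every atom of \<open>S\<^sub>r\<close>.
\<close>

lemma sin_diff_squared_le: "sin ((x::real) - y)^2 \<le> 2 * (sin x ^ 2 + sin y ^ 2)"
proof -
  have "\<bar>sin (x - y)\<bar> \<le> \<bar>sin x * cos y\<bar> + \<bar>cos x * sin y\<bar>"
    unfolding sin_diff by (rule abs_triangle_ineq4)
  also have "\<dots> \<le> \<bar>sin x\<bar> + \<bar>sin y\<bar>"
  proof -
    have "\<bar>sin x\<bar> * \<bar>cos y\<bar> \<le> \<bar>sin x\<bar>" "\<bar>cos x\<bar> * \<bar>sin y\<bar> \<le> \<bar>sin y\<bar>"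
      by (simp_all add: mult_left_le mult_left_le_one_le abs_cos_le_one)
    then show ?thesis by (simp add: abs_mult)
  qed
  finally have "sin (x - y)^2 \<le> (\<bar>sin x\<bar> + \<bar>sin y\<bar>)^2"
    by (metis abs_ge_zero power2_abs power_mono)
  moreover have "(\<bar>sin x\<bar> + \<bar>sin y\<bar>)^2 \<le> 2 * (sin x ^ 2 + sin y ^ 2)"
    using sum_squares_ge_zero[of "\<bar>sin x\<bar> - \<bar>sin y\<bar>" 0]
    by (simp add: power2_eq_square algebra_simps)
  ultimately show ?thesis by linarith
qed

lemma sin_ge_half_self:
  fixes y :: real
  assumes "0 \<le> y" "y \<le> 1"
  shows "y / 2 \<le> sin y"
proof -
  have "cos (pi / 3) \<le> cos x" if "0 \<le> x" "x \<le> y" for x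
    using that assms pi_gt3 by (intro cos_monotone_0_pi_le) auto
  then have "(\<lambda>t. sin t - t / 2) 0 \<le> (\<lambda>t. sin t - t / 2) y"
    by (intro DERIV_nonneg_imp_nondecreasing[OF assms(1)])
       (auto intro!: derivative_eq_intros simp: cos_60)
  then show ?thesis by simp
qed

lemma sin_squared_ge_half:
  fixes x :: real
  assumes "pi / 4 \<le> x" "x \<le> 3 * pi / 4"
  shows "1 / 2 \<le> sin x ^ 2"
proof -
  have "cos (2 * x) = - sin (2 * x - pi / 2)" by (simp add: sin_diff)
  moreover have "0 \<le> sin (2 * x - pi / 2)" using assms by (intro sin_ge_zero) auto
  ultimately show ?thesis by (simp add: cos_double_sin)
qed

lemma sin_squared_le_progression_sum:
  fixes m g :: nat
  assumes "g \<le> m"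
  shows "(real m - real g) * sin (real g * e)^2 \<le> 4 * (\<Sum>i<m. sin (b + real i * e)^2)"
proof -
  let ?s = "\<lambda>i. sin (b + real i * e)^2"
  have "(real m - real g) * sin (real g * e)^2 = (\<Sum>i<m-g. sin (real g * e)^2)"
    using assms by simp
  also have "\<dots> \<le> (\<Sum>i<m-g. 2 * (?s (i + g) + ?s i))"
  proof (intro sum_mono)
    fix i
    have "real g * e = (b + real (i + g) * e) - (b + real i * e)" by (simp add: algebra_simps)
    then show "sin (real g * e)^2 \<le> 2 * (?s (i + g) + ?s i)"
      by (metis sin_diff_squared_le)
  qed
  also have "\<dots> = 2 * (\<Sum>i\<in>(\<lambda>i. i + g) ` {..<m-g}. ?s i) + 2 * (\<Sum>i<m-g. ?s i)"
    by (simp add: sum.distrib sum_distrib_left sum.reindex)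
  also have "\<dots> \<le> 2 * (\<Sum>i<m. ?s i) + 2 * (\<Sum>i<m. ?s i)"
    by (intro add_mono mult_left_mono sum_mono2) auto
  finally show ?thesis by simp
qed

lemma progression_bound_small_step:
  fixes m :: nat
  assumes m: "4 \<le> m" and d: "0 \<le> d" and small: "real (m div 2) * d \<le> 1"
  shows "real m ^ 3 * d^2 / 72 \<le> (real m - real (m div 2)) * sin (real (m div 2) * d)^2"
proof -
  define h where "h = m div 2"
  have h: "real m \<le> 3 * real h" "real m / 2 \<le> real m - real h"
    using m unfolding h_def by linarith+
  have hd: "0 \<le> real h * d" using d by simp
  have "(real h * d / 2)^2 \<le> sin (real h * d)^2"
    using sin_ge_half_self[OF hd small[folded h_def]] hd by (intro power_mono) auto
  moreover have "real m / 3 * d / 2 \<le> real h * d / 2"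
    using h d by (intro divide_right_mono mult_right_mono) auto
  then have "(real m / 3 * d / 2)^2 \<le> (real h * d / 2)^2"
    using d by (intro power_mono) auto
  ultimately have "(real m / 2) * (real m / 3 * d / 2)^2 \<le> (real m - real h) * sin (real h * d)^2"
    using h by (intro mult_mono) auto
  moreover have "(real m / 2) * (real m / 3 * d / 2)^2 = real m ^ 3 * d^2 / 72"
    by (simp add: power2_eq_square power3_eq_cube)
  ultimately show ?thesis unfolding h_def by linarith
qed

text \<open>For a large step \<open>d\<close>, the multiple \<open>g d\<close> with \<open>g = \<lceil>\<pi> / (4 d)\<rceil>\<close> lies in
  \<open>[\<pi>/4, 3\<pi>/4]\<close>.\<close>
lemma progression_bound_large_step:
  fixes m :: nat
  assumes m: "4 \<le> m" and d: "0 < d" "d \<le> pi / 2" and large: "1 < real (m div 2) * d"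
  shows "\<exists>g\<le>m. real m / 8 \<le> (real m - real g) * sin (real g * d)^2"
proof -
  define g where "g = nat \<lceil>pi / (4 * d)\<rceil>"
  have q0: "0 < pi / (4 * d)" using d by simp
  have g1: "pi / (4 * d) \<le> real g" and g2: "real g < pi / (4 * d) + 1"
    unfolding g_def using q0 by linarith+
  have "pi / 4 \<le> real g * d" using g1 d by (simp add: field_simps)
  moreover have "real g * d < pi / 4 + d" using g2 d by (simp add: field_simps)
  ultimately have sq: "1 / 2 \<le> sin (real g * d)^2"
    using d by (intro sin_squared_ge_half) auto
  have "pi / (4 * d) < pi * real (m div 2) / 4" using large d by (simp add: field_simps)
  moreover have "pi * real (m div 2) \<le> 4 * real (m div 2)"
    using pi_less_4 by (intro mult_right_mono) auto
  ultimately have "real g < real m / 2 + 1" using g2 by linarith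
  then have gm: "g \<le> m" and mg: "real m / 4 \<le> real m - real g" using m by linarith+
  have "real m / 8 = (real m / 4) * (1 / 2)" by simp
  also have "\<dots> \<le> (real m - real g) * sin (real g * d)^2"
    using mg sq by (intro mult_mono) auto
  finally show ?thesis using gm by blast
qed

lemma sum_sin_squared_progression_ge:
  fixes m :: nat
  assumes m: "4 \<le> m" and d: "0 \<le> d" "d \<le> pi / 2"
    and eq: "\<And>g::nat. sin (real g * e)^2 = sin (real g * d)^2"
  shows "min (real m ^ 3 * d^2 / 288) (real m / 32) \<le> (\<Sum>i<m. sin (b + real i * e)^2)"
proof (cases "real (m div 2) * d \<le> 1")
  case True
  with progression_bound_small_step[OF m d(1)]
    sin_squared_le_progression_sum[of "m div 2" m e b] eq show ?thesis by fastforce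
next
  case False
  with d have "0 < d" by (cases "d = 0") auto
  with progression_bound_large_step[OF m _ d(2)] False obtain g
    where "g \<le> m" "real m / 8 \<le> (real m - real g) * sin (real g * d)^2" by force
  with sin_squared_le_progression_sum[of g m e b] eq show ?thesis by fastforce
qed

lemma exp_neg_le_four_div_square:
  fixes x :: real
  assumes "0 < x"
  shows "exp (- x) \<le> 4 / x^2"
proof -
  have "x / 2 \<le> exp (x / 2)" using exp_ge_add_one_self[of "x / 2"] by linarith
  then have "(x / 2)^2 \<le> exp (x / 2)^2" using assms by (intro power_mono) auto
  also have "exp (x / 2)^2 = exp x" by (simp flip: exp_double)
  finally show ?thesis using assms by (simp add: exp_minus field_simps power_divide)
qed

lemma exp_neg_square_le_power:
  fixes t u :: nat
  assumes a: "0 < a" and at: "1 \<le> a * real t ^ 2"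
  shows "exp (- a * real u ^ 2) \<le> exp (-1) ^ (u div t)"
proof -
  define q where "q = u div t"
  have "q * t \<le> u" unfolding q_def by (rule div_times_less_eq_dividend)
  then have "real q * real t \<le> real u" by (metis of_nat_le_iff of_nat_mult)
  have "real q \<le> real q ^ 2" by (cases q) (auto simp: power2_eq_square)
  also have "\<dots> \<le> real q ^ 2 * (a * real t ^ 2)"
    using mult_left_mono[OF at, of "real q ^ 2"] by simp
  also have "\<dots> = a * (real q * real t)^2" by (simp add: power_mult_distrib)
  also have "\<dots> \<le> a * real u ^ 2"
    using \<open>real q * real t \<le> real u\<close> a by (intro mult_left_mono power_mono) auto
  finally have "- a * real u ^ 2 \<le> real q * (-1)" by simp
  then show ?thesis unfolding q_def by (metis exp_le_cancel_iff exp_of_nat_mult)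
qed

lemma sum_exp_neg_one_power_le: "(\<Sum>q<L. exp (-1::real) ^ q) \<le> 2"
proof -
  have e: "exp (-1::real) \<le> 1 / 2"
    using exp_ge_add_one_self[of 1] by (simp add: exp_minus field_simps)
  have "(\<Sum>q<L. exp (-1::real) ^ q) = (1 - exp (-1) ^ L) / (1 - exp (-1))"
    using e by (subst sum_gp_strict) auto
  also have "\<dots> \<le> 1 / (1 - exp (-1))"
    using e by (intro divide_right_mono) auto
  also have "\<dots> \<le> 2" using e by (simp add: field_simps)
  finally show ?thesis .
qed

text \<open>Group the terms into blocks of length \<open>t = \<lceil>1 / \<surd>a\<rceil>\<close>; the \<open>q\<close>-th block is at most
  \<open>t e\<^sup>-\<^sup>q\<close>.\<close>
lemma sum_gaussian_le:
  fixes a :: real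
  assumes a: "0 < a"
  shows "(\<Sum>u<L. exp (- a * real u ^ 2)) \<le> 2 * (1 + 1 / sqrt a)"
proof -
  define t where "t = nat \<lceil>1 / sqrt a\<rceil>"
  have "real t = of_int \<lceil>1 / sqrt a\<rceil>"
    unfolding t_def using a by (simp add: order_less_imp_le)
  then have t: "1 / sqrt a \<le> real t" "real t \<le> 1 / sqrt a + 1"
    by linarith+
  then have "1 \<le> sqrt a * real t" using a by (simp add: field_simps)
  then have at: "1 \<le> a * real t ^ 2"
    using a one_le_power[of "sqrt a * real t" 2] by (simp add: power_mult_distrib)
  then have "1 \<le> t" by (cases t) auto
  have "(\<Sum>u<L. exp (- a * real u ^ 2)) \<le> (\<Sum>u<L * t. exp (- a * real u ^ 2))"
    using \<open>1 \<le> t\<close> by (intro sum_mono2) auto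
  also have "\<dots> \<le> (\<Sum>u<L * t. exp (-1) ^ (u div t))"
    by (intro sum_mono exp_neg_square_le_power[OF a at])
  also have "\<dots> = (\<Sum>q<L. \<Sum>u\<in>{q * t..<q * t + t}. exp (-1) ^ (u div t))"
    by (rule sum.nat_group[symmetric])
  also have "\<dots> = (\<Sum>q<L. real t * exp (-1) ^ q)"
  proof (intro sum.cong refl)
    fix q
    have "u div t = q" if "u \<in> {q * t..<q * t + t}" for u
      using that \<open>1 \<le> t\<close> by (auto intro: div_nat_eqI simp: mult.commute)
    then show "(\<Sum>u\<in>{q * t..<q * t + t}. exp (-1) ^ (u div t)) = real t * exp (-1) ^ q"
      by simp
  qed
  also have "\<dots> = real t * (\<Sum>q<L. exp (-1) ^ q)" by (simp add: sum_distrib_left)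
  also have "\<dots> \<le> real t * 2" by (intro mult_left_mono sum_exp_neg_one_power_le) simp
  also have "\<dots> \<le> 2 * (1 + 1 / sqrt a)" using t by simp
  finally show ?thesis .
qed

lemma sum_gaussian_folded_le:
  fixes a :: real
  assumes a: "0 < a"
  shows "(\<Sum>r<M. exp (- a * real (min r (M - r)) ^ 2)) \<le> 4 * (1 + 1 / sqrt a)"
proof -
  have "exp (- a * real (min r (M - r)) ^ 2) \<le> exp (- a * real r ^ 2) + exp (- a * real (M - r) ^ 2)"
    for r by (cases "r \<le> M - r") (simp_all add: min_def add_increasing add_increasing2)
  then have "(\<Sum>r<M. exp (- a * real (min r (M - r)) ^ 2))
      \<le> (\<Sum>r<M. exp (- a * real r ^ 2) + exp (- a * real (M - r) ^ 2))"
    by (intro sum_mono)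
  also have "\<dots> = (\<Sum>r<M. exp (- a * real r ^ 2)) + (\<Sum>r<M. exp (- a * real (M - r) ^ 2))"
    by (rule sum.distrib)
  also have "(\<Sum>r<M. exp (- a * real (M - r) ^ 2))
      = (\<Sum>u\<in>(\<lambda>r. M - r) ` {..<M}. exp (- a * real u ^ 2))"
    by (subst sum.reindex) (auto simp: inj_on_def)
  also have "\<dots> \<le> (\<Sum>u<M + 1. exp (- a * real u ^ 2))"
    by (intro sum_mono2) auto
  finally show ?thesis using sum_gaussian_le[OF a, of M] sum_gaussian_le[OF a, of "M + 1"]
    by linarith
qed

lemma sum_lessThan_mult_mod:
  fixes f :: "nat \<Rightarrow> 'a::comm_semiring_1"
  shows "(\<Sum>l<q * M. f (l mod M)) = of_nat q * (\<Sum>r<M. f r)"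
proof -
  have "(\<Sum>l<q * M. f (l mod M)) = (\<Sum>q'<q. \<Sum>l\<in>{q' * M..<q' * M + M}. f (l mod M))"
    by (rule sum.nat_group[symmetric])
  also have "\<dots> = (\<Sum>q'<q. \<Sum>r<M. f r)"
  proof (rule sum.cong[OF refl])
    fix q'
    have "(\<Sum>l\<in>{q' * M..<q' * M + M}. f (l mod M)) = (\<Sum>l\<in>{0 + q' * M..<M + q' * M}. f (l mod M))"
      by (simp add: add.commute)
    also have "\<dots> = (\<Sum>r\<in>{0..<M}. f ((r + q' * M) mod M))"
      by (rule sum.shift_bounds_nat_ivl)
    finally show "(\<Sum>l\<in>{q' * M..<q' * M + M}. f (l mod M)) = (\<Sum>r<M. f r)"
      by (simp add: atLeast0LessThan)
  qed
  finally show ?thesis by simp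
qed

section \<open>Products of probability mass functions\<close>

lemma integral_pair_pmf_finite:
  fixes f :: "'a \<times> 'b \<Rightarrow> 'c::{banach, second_countable_topology}"
  assumes A: "finite (set_pmf A)" and B: "finite (set_pmf B)"
  shows "measure_pmf.expectation (pair_pmf A B) f =
         measure_pmf.expectation A (\<lambda>a. measure_pmf.expectation B (\<lambda>b. f (a, b)))"
proof -
  have inner: "measure_pmf.expectation B (\<lambda>b. f (a, b)) = (\<Sum>b\<in>set_pmf B. pmf B b *\<^sub>R f (a, b))" for a
    by (rule integral_measure_pmf) (use B in auto)
  have "measure_pmf.expectation (pair_pmf A B) f
      = (\<Sum>z\<in>set_pmf A \<times> set_pmf B. pmf (pair_pmf A B) z *\<^sub>R f z)"
    by (rule integral_measure_pmf) (use A B in auto)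
  also have "\<dots> = (\<Sum>(a, b)\<in>set_pmf A \<times> set_pmf B. pmf A a *\<^sub>R (pmf B b *\<^sub>R f (a, b)))"
    by (intro sum.cong refl) (auto simp: pmf_pair)
  also have "\<dots> = (\<Sum>a\<in>set_pmf A. \<Sum>b\<in>set_pmf B. pmf A a *\<^sub>R (pmf B b *\<^sub>R f (a, b)))"
    by (simp add: sum.cartesian_product)
  also have "\<dots> = (\<Sum>a\<in>set_pmf A. pmf A a *\<^sub>R measure_pmf.expectation B (\<lambda>b. f (a, b)))"
    by (simp add: inner scaleR_sum_right)
  also have "\<dots> = measure_pmf.expectation A (\<lambda>a. measure_pmf.expectation B (\<lambda>b. f (a, b)))"
    by (rule integral_measure_pmf[symmetric]) (use A in auto)
  finally show ?thesis .
qed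

lemma prob_pair_pmf_finite:
  assumes "finite (set_pmf A)" "finite (set_pmf B)"
  shows "measure_pmf.prob (pair_pmf A B) T =
         measure_pmf.expectation A (\<lambda>a. measure_pmf.prob B {b. (a, b) \<in> T})"
proof -
  have "(\<lambda>b. indicator T (a, b) :: real) = indicator {b. (a, b) \<in> T}" for a
    by (auto simp: indicator_def)
  then show ?thesis
    using integral_pair_pmf_finite[OF assms, of "indicator T :: _ \<Rightarrow> real"] by simp
qed

lemma finite_set_Pi_pmf:
  assumes "finite J" "\<And>j. j \<in> J \<Longrightarrow> finite (set_pmf (P j))"
  shows "finite (set_pmf (Pi_pmf J d P))"
  using assms by (simp add: set_Pi_pmf finite_PiE_dflt)

lemma expectation_prod_Pi_pmf_finite:
  fixes f :: "'a \<Rightarrow> 'b \<Rightarrow> 'c::{real_normed_field, banach, second_countable_topology}"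
  assumes "finite J" "\<And>j. finite (set_pmf (P j))"
  shows "measure_pmf.expectation (Pi_pmf J d P) (\<lambda>xi. \<Prod>j\<in>J. f j (xi j)) =
         (\<Prod>j\<in>J. measure_pmf.expectation (P j) (f j))"
  using assms(1)
proof (induction rule: finite_induct)
  case empty
  show ?case by simp
next
  case (insert x J)
  have fin: "finite (set_pmf (Pi_pmf J d P))"
    by (rule finite_set_Pi_pmf) (use insert assms in auto)
  have upd: "(\<Prod>j\<in>insert x J. f j ((g(x := y)) j)) = f x y * (\<Prod>j\<in>J. f j (g j))" for g y
    using insert by (auto intro!: prod.cong)
  have "measure_pmf.expectation (Pi_pmf (insert x J) d P) (\<lambda>xi. \<Prod>j\<in>insert x J. f j (xi j)) =
        measure_pmf.expectation (pair_pmf (P x) (Pi_pmf J d P))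
          (\<lambda>z. \<Prod>j\<in>insert x J. f j (((snd z)(x := fst z)) j))"
    using insert by (simp add: Pi_pmf_insert case_prod_unfold)
  also have "\<dots> = measure_pmf.expectation (P x) (\<lambda>y. measure_pmf.expectation (Pi_pmf J d P)
          (\<lambda>g. \<Prod>j\<in>insert x J. f j ((g(x := y)) j)))"
    by (simp only: integral_pair_pmf_finite[OF assms(2) fin] fst_conv snd_conv)
  also have "\<dots> = measure_pmf.expectation (P x) (\<lambda>y. f x y *
          measure_pmf.expectation (Pi_pmf J d P) (\<lambda>g. \<Prod>j\<in>J. f j (g j)))"
    by (simp only: upd integral_mult_right_zero)
  also have "\<dots> = (\<Prod>j\<in>insert x J. measure_pmf.expectation (P j) (f j))"
    using insert by simp
  finally show ?case .
qed

lemma prob_Pi_pmf_split: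
  fixes P :: "'a \<Rightarrow> 'b pmf"
  assumes A: "finite A" and BA: "B \<subseteq> A" and fin: "\<And>j. finite (set_pmf (P j))"
  shows "measure_pmf.prob (Pi_pmf A dflt P) E =
    measure_pmf.expectation (Pi_pmf (A - B) dflt P)
      (\<lambda>g. measure_pmf.prob (Pi_pmf B dflt P) {f. (\<lambda>x. if x \<in> B then f x else g x) \<in> E})"
proof -
  define Q1 Q2 where "Q1 = Pi_pmf B dflt P" and "Q2 = Pi_pmf (A - B) dflt P"
  define mg :: "('a \<Rightarrow> 'b) \<times> ('a \<Rightarrow> 'b) \<Rightarrow> 'a \<Rightarrow> 'b"
    where "mg = (\<lambda>(g, f) x. if x \<in> A - B then g x else f x)"
  have B: "finite B" using A BA finite_subset by blast
  have "Pi_pmf ((A - B) \<union> B) dflt P = map_pmf mg (pair_pmf Q2 Q1)"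
    unfolding mg_def Q1_def Q2_def by (rule Pi_pmf_union) (use A B in auto)
  moreover have "(A - B) \<union> B = A" using BA by auto
  ultimately have "measure_pmf.prob (Pi_pmf A dflt P) E = measure_pmf.prob (pair_pmf Q2 Q1) (mg -` E)"
    by simp
  also have "\<dots> = measure_pmf.expectation Q2 (\<lambda>g. measure_pmf.prob Q1 {f. mg (g, f) \<in> E})"
  proof -
    have "finite (set_pmf Q1)" "finite (set_pmf Q2)"
      unfolding Q1_def Q2_def using A B fin by (auto intro: finite_set_Pi_pmf)
    then show ?thesis by (simp add: prob_pair_pmf_finite)
  qed
  also have "\<dots> = measure_pmf.expectation Q2
      (\<lambda>g. measure_pmf.prob Q1 {f. (\<lambda>x. if x \<in> B then f x else g x) \<in> E})"
  proof (intro integral_cong_AE AE_pmfI)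
    fix g assume g: "g \<in> set_pmf Q2"
    have "mg (g, f) = (\<lambda>x. if x \<in> B then f x else g x)" if f: "f \<in> set_pmf Q1" for f
    proof -
      have "\<forall>x. x \<notin> B \<longrightarrow> f x = dflt"
        using subsetD[OF set_Pi_pmf_subset[OF B] f[unfolded Q1_def]] by simp
      moreover have "\<forall>x. x \<notin> A - B \<longrightarrow> g x = dflt"
        using subsetD[OF set_Pi_pmf_subset g[unfolded Q2_def]] A by simp
      ultimately show ?thesis unfolding mg_def using BA by (auto simp: fun_eq_iff)
    qed
    then have "{f. mg (g, f) \<in> E} \<inter> set_pmf Q1 = {f. (\<lambda>x. if x \<in> B then f x else g x) \<in> E} \<inter> set_pmf Q1"
      by auto
    then show "measure_pmf.prob Q1 {f. mg (g, f) \<in> E}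
        = measure_pmf.prob Q1 {f. (\<lambda>x. if x \<in> B then f x else g x) \<in> E}"
      by (metis (no_types) measure_Int_set_pmf)
  qed simp_all
  finally show ?thesis unfolding Q1_def Q2_def .
qed

text \<open>The last factor is the probability that \<open>E\<close> can be reached by changing the
  coordinates in \<open>B\<close>.\<close>
lemma prob_Pi_pmf_le_block:
  fixes S :: "('a \<Rightarrow> 'b) \<Rightarrow> 'c" and P :: "'a \<Rightarrow> 'b pmf"
  assumes A: "finite A" and BA: "B \<subseteq> A" and fin: "\<And>j. finite (set_pmf (P j))"
    and local: "\<And>xi xi'. (\<forall>j\<in>B. xi j = xi' j) \<Longrightarrow> S xi = S xi'"
    and atom: "\<And>s. measure_pmf.prob (Pi_pmf B dflt P) {f. S f = s} \<le> Mx"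
    and determined: "\<And>xi xi'. xi \<in> E \<Longrightarrow> xi' \<in> E \<Longrightarrow> (\<forall>j. j \<notin> B \<longrightarrow> xi j = xi' j) \<Longrightarrow> S xi = S xi'"
  shows "measure_pmf.prob (Pi_pmf A dflt P) E
         \<le> Mx * measure_pmf.prob (Pi_pmf A dflt P) {xi. \<exists>z. (\<lambda>x. if x \<in> B then z x else xi x) \<in> E}"
proof -
  define Q where "Q = Pi_pmf B dflt P"
  define mg :: "('a \<Rightarrow> 'b) \<Rightarrow> ('a \<Rightarrow> 'b) \<Rightarrow> 'a \<Rightarrow> 'b"
    where "mg = (\<lambda>g f x. if x \<in> B then f x else g x)"
  define reach where "reach = {g. \<exists>z. mg g z \<in> E}"
  have slice: "measure_pmf.prob Q {f. mg g f \<in> E} \<le> Mx * indicator reach g" for g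
  proof (cases "g \<in> reach")
    case True
    then obtain z0 where z0: "mg g z0 \<in> E" unfolding reach_def by blast
    have "S f = S z0" if "mg g f \<in> E" for f
    proof -
      have "S (mg g f) = S (mg g z0)" using determined[OF that z0] by (simp add: mg_def)
      moreover have "S (mg g f) = S f" "S (mg g z0) = S z0" by (auto intro: local simp: mg_def)
      ultimately show ?thesis by simp
    qed
    then have "measure_pmf.prob Q {f. mg g f \<in> E} \<le> measure_pmf.prob Q {f. S f = S z0}"
      by (intro measure_pmf.finite_measure_mono) auto
    also have "\<dots> \<le> Mx" unfolding Q_def by (rule atom)
    finally show ?thesis using True by simp
  qed (simp add: reach_def)
  have reach: "measure_pmf.prob Q {f. (\<lambda>x. if x \<in> B then f x else g x)
      \<in> {xi. \<exists>z. (\<lambda>x. if x \<in> B then z x else xi x) \<in> E}} = indicator reach g" for g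
  proof -
    have "{f. (\<lambda>x. if x \<in> B then f x else g x) \<in> {xi. \<exists>z. (\<lambda>x. if x \<in> B then z x else xi x) \<in> E}}
        = (if g \<in> reach then UNIV else {})"
      by (auto simp: reach_def mg_def cong: if_cong)
    then show ?thesis by simp
  qed
  have "measure_pmf.prob (Pi_pmf A dflt P) E
      = measure_pmf.expectation (Pi_pmf (A - B) dflt P) (\<lambda>g. measure_pmf.prob Q {f. mg g f \<in> E})"
    unfolding Q_def mg_def by (rule prob_Pi_pmf_split[OF A BA fin])
  also have "\<dots> \<le> measure_pmf.expectation (Pi_pmf (A - B) dflt P) (\<lambda>g. Mx * indicator reach g)"
    using A fin by (intro integral_mono slice integrable_measure_pmf_finite finite_set_Pi_pmf) auto
  also have "\<dots> = Mx * measure_pmf.expectation (Pi_pmf (A - B) dflt P) (indicator reach)"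
    by simp
  also have "\<dots> = Mx * measure_pmf.prob (Pi_pmf A dflt P) {xi. \<exists>z. (\<lambda>x. if x \<in> B then z x else xi x) \<in> E}"
    unfolding Q_def prob_Pi_pmf_split[OF A BA fin] reach[unfolded Q_def] ..
  finally show ?thesis .
qed

text \<open>Iterating \<open>prob_Pi_pmf_le_block\<close> over disjoint blocks: each block is conditioned
  away in turn, and the event stays determining for the remaining blocks.\<close>
lemma prob_Pi_pmf_le_prod_blocks:
  fixes S :: "nat \<Rightarrow> ('a \<Rightarrow> 'b) \<Rightarrow> 'c" and P :: "'a \<Rightarrow> 'b pmf" and I :: "nat \<Rightarrow> 'a set"
  assumes A: "finite A" and fin: "\<And>j. finite (set_pmf (P j))"
    and sub: "\<And>r. r < d \<Longrightarrow> I r \<subseteq> A" and disj: "disjoint_family_on I {..<d}"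
    and local: "\<And>r xi xi'. r < d \<Longrightarrow> (\<forall>j\<in>I r. xi j = xi' j) \<Longrightarrow> S r xi = S r xi'"
    and atom: "\<And>r s. r < d \<Longrightarrow> measure_pmf.prob (Pi_pmf (I r) dflt P) {f. S r f = s} \<le> Mx r"
    and determined: "\<And>xi xi'. xi \<in> E \<Longrightarrow> xi' \<in> E \<Longrightarrow> (\<forall>j. j \<notin> (\<Union>r<d. I r) \<longrightarrow> xi j = xi' j)
               \<Longrightarrow> \<forall>r<d. S r xi = S r xi'"
  shows "measure_pmf.prob (Pi_pmf A dflt P) E \<le> (\<Prod>r<d. Mx r)"
  using sub disj local atom determined
proof (induction d arbitrary: E)
  case (Suc d)
  define upd :: "('a \<Rightarrow> 'b) \<Rightarrow> ('a \<Rightarrow> 'b) \<Rightarrow> 'a \<Rightarrow> 'b"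
    where "upd = (\<lambda>z xi x. if x \<in> I d then z x else xi x)"
  define E' where "E' = {xi. \<exists>z. upd z xi \<in> E}"
  have Mx0: "0 \<le> Mx d" using Suc.prems(4)[of d undefined] by (meson order.trans measure_nonneg lessI)
  have step: "measure_pmf.prob (Pi_pmf A dflt P) E \<le> Mx d * measure_pmf.prob (Pi_pmf A dflt P) E'"
    unfolding E'_def upd_def
  proof (rule prob_Pi_pmf_le_block[OF A _ fin])
    show "S d xi = S d xi'" if "xi \<in> E" "xi' \<in> E" "\<forall>j. j \<notin> I d \<longrightarrow> xi j = xi' j" for xi xi'
      using Suc.prems(5)[OF that(1,2)] that(3) by auto
  qed (use Suc.prems(1,3,4) in auto)
  have "measure_pmf.prob (Pi_pmf A dflt P) E' \<le> (\<Prod>r<d. Mx r)"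
  proof (rule Suc.IH)
    show "disjoint_family_on I {..<d}" using Suc.prems(2) by (auto simp: disjoint_family_on_def)
    fix xi xi' assume "xi \<in> E'" "xi' \<in> E'" and agree: "\<forall>j. j \<notin> (\<Union>r<d. I r) \<longrightarrow> xi j = xi' j"
    then obtain z z' where z: "upd z xi \<in> E" "upd z' xi' \<in> E" unfolding E'_def by blast
    have "\<forall>j. j \<notin> (\<Union>r<Suc d. I r) \<longrightarrow> upd z xi j = upd z' xi' j"
      using agree by (auto simp: upd_def lessThan_Suc)
    then have same: "\<forall>r<Suc d. S r (upd z xi) = S r (upd z' xi')" by (rule Suc.prems(5)[OF z])
    show "\<forall>r<d. S r xi = S r xi'"
    proof (intro allI impI)
      fix r assume r: "r < d"
      then have "I r \<inter> I d = {}" using Suc.prems(2) by (auto simp: disjoint_family_on_def)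
      then have "S r xi = S r (upd z xi)" "S r xi' = S r (upd z' xi')"
        using r by (auto intro!: Suc.prems(3) simp: upd_def)
      with same r show "S r xi = S r xi'" by simp
    qed
  qed (use Suc.prems in auto)
  with step Mx0 have "measure_pmf.prob (Pi_pmf A dflt P) E \<le> Mx d * (\<Prod>r<d. Mx r)"
    by (meson mult_left_mono order.trans)
  then show ?case by (simp add: mult.commute)
qed simp

section \<open>Characteristic functions of ternary variables\<close>

definition chf :: "int pmf \<Rightarrow> real \<Rightarrow> complex" where
  "chf p t = measure_pmf.expectation p (\<lambda>x. cis (t * real_of_int x))"

text \<open>The rate \<open>\<gamma>\<close> in \<open>|\<phi>(t)| \<le> exp (-\<gamma> sin\<^sup>2 t)\<close>: for \<open>p\<^sub>i = pmf p i\<close> one has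
  \<open>|\<phi>(t)|\<^sup>2 = 1 - 2 p\<^sub>0 (p\<^sub>1 + p\<^sub>-\<^sub>1) (1 - cos t) - 4 p\<^sub>1 p\<^sub>-\<^sub>1 sin\<^sup>2 t\<close>, and \<open>sin\<^sup>2 t \<le> 2 (1 - cos t)\<close>.\<close>
definition chf_decay :: "int pmf \<Rightarrow> real" where
  "chf_decay p = (pmf p 0 * (pmf p 1 + pmf p (-1)) + 4 * pmf p 1 * pmf p (-1)) / 2"

lemma chf_ternary:
  assumes "set_pmf p \<subseteq> {-1, 0, 1}"
  shows "chf p t = of_real (pmf p 0) + of_real (pmf p 1) * cis t + of_real (pmf p (-1)) * cis (- t)"
proof -
  have "chf p t = (\<Sum>a\<in>{-1, 0, 1::int}. pmf p a *\<^sub>R cis (t * real_of_int a))"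
    unfolding chf_def by (rule integral_measure_pmf) (use assms in auto)
  then show ?thesis by (simp add: scaleR_conv_of_real)
qed

lemma norm_chf_le_exp_sin:
  assumes supp: "set_pmf p \<subseteq> {-1, 0, 1}"
  shows "cmod (chf p t) \<le> exp (- chf_decay p * sin t ^ 2)"
proof -
  define p0 p1 pm where "p0 = pmf p 0" and "p1 = pmf p 1" and "pm = pmf p (-1)"
  have "(\<Sum>x\<in>{-1, 0, 1::int}. pmf p x) = 1" by (rule sum_pmf_eq_1) (use supp in auto)
  then have p0: "p0 = 1 - p1 - pm" unfolding p0_def p1_def pm_def by simp
  have nonneg: "0 \<le> p0 * (p1 + pm)" unfolding p0_def p1_def pm_def by simp
  have cos_sin: "cos t ^ 2 = 1 - sin t ^ 2" by (simp add: cos_squared_eq)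
  have "sin t ^ 2 = (1 - cos t) * (1 + cos t)" using cos_sin by (simp add: algebra_simps power2_eq_square)
  also have "\<dots> \<le> (1 - cos t) * 2" by (rule mult_left_mono) (use cos_le_one[of t] in auto)
  finally have sin_cos: "p0 * (p1 + pm) * sin t ^ 2 \<le> p0 * (p1 + pm) * (2 * (1 - cos t))"
    using nonneg by (intro mult_left_mono) auto
  have "cmod (chf p t) ^ 2 = (p0 + (p1 + pm) * cos t)^2 + ((p1 - pm) * sin t)^2"
    using chf_ternary[OF supp, of t]
    by (simp add: cmod_power2 p0_def p1_def pm_def algebra_simps)
  also have "\<dots> = 1 - 2 * p0 * (p1 + pm) * (1 - cos t) - 4 * p1 * pm * sin t ^ 2"
    unfolding p0 using cos_sin by algebra
  also have "\<dots> \<le> 1 - (2 * chf_decay p) * sin t ^ 2"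
  proof -
    have "2 * chf_decay p = p0 * (p1 + pm) + 4 * p1 * pm"
      unfolding chf_decay_def p0_def p1_def pm_def by simp
    then show ?thesis using sin_cos by (simp add: algebra_simps)
  qed
  also have "\<dots> \<le> exp (2 * (- chf_decay p * sin t ^ 2))"
    using exp_ge_add_one_self[of "2 * (- chf_decay p * sin t ^ 2)"] by simp
  also have "\<dots> = exp (- chf_decay p * sin t ^ 2) ^ 2"
    by (rule exp_double)
  finally show ?thesis by (rule power2_le_imp_le) simp
qed

lemma chf_decay_pos:
  assumes supp: "set_pmf p \<subseteq> {-1, 0, 1}" and nondeg: "\<forall>x\<in>{-1, 0, 1}. pmf p x < 1"
  shows "0 < chf_decay p"
proof -
  define p0 p1 pm where "p0 = pmf p 0" and "p1 = pmf p 1" and "pm = pmf p (-1)"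
  have "(\<Sum>x\<in>{-1, 0, 1::int}. pmf p x) = 1" by (rule sum_pmf_eq_1) (use supp in auto)
  then have sum: "p0 + p1 + pm = 1" unfolding p0_def p1_def pm_def by simp
  have lt: "p0 < 1" "p1 < 1" "pm < 1" using nondeg unfolding p0_def p1_def pm_def by auto
  have nn: "0 \<le> p0" "0 \<le> p1" "0 \<le> pm" unfolding p0_def p1_def pm_def by simp_all
  have "0 < p0 * (p1 + pm) + 4 * p1 * pm"
  proof (cases "p0 = 0")
    case True
    with sum lt have "0 < p1" "0 < pm" by linarith+
    with nn show ?thesis by (simp add: add_nonneg_pos)
  next
    case False
    with nn sum lt have "0 < p0 * (p1 + pm)" by (simp add: add_pos_nonneg)
    with nn show ?thesis by (simp add: add_pos_nonneg)
  qed
  then show ?thesis unfolding chf_decay_def p0_def p1_def pm_def by simp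
qed

lemma cis_sum: "finite A \<Longrightarrow> cis (\<Sum>x\<in>A. f x) = (\<Prod>x\<in>A. cis (f x))"
  by (induct A rule: finite_induct) (auto simp flip: cis_mult)

lemma sum_cis_roots_of_unity:
  fixes z :: int and N :: nat
  assumes N: "0 < N" and z: "\<bar>z\<bar> < int N"
  shows "(\<Sum>l<N. cis (2 * pi * real l * real_of_int z / real N)) = (if z = 0 then of_nat N else 0)"
proof (cases "z = 0")
  case False
  define w where "w = cis (2 * pi * real_of_int z / real N)"
  have pw: "cis (2 * pi * real l * real_of_int z / real N) = w ^ l" for l
  proof -
    have "2 * pi * real l * real_of_int z / real N = real l * (2 * pi * real_of_int z / real N)"
      by (simp add: divide_inverse mult_ac)
    moreover have "w ^ l = cis (real l * (2 * pi * real_of_int z / real N))"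
      unfolding w_def by (rule Complex.DeMoivre)
    ultimately show ?thesis by (simp only:)
  qed
  have "w \<noteq> 1"
  proof
    assume "w = 1"
    then have "cos (2 * pi * real_of_int z / real N) = 1" unfolding w_def
      by (metis cis.sel(1) one_complex.sel(1))
    then obtain n :: int where "2 * pi * real_of_int z / real N = real_of_int n * 2 * pi"
      using cos_one_2pi_int by blast
    then have "real_of_int z = real_of_int n * real N" using N by (simp add: field_simps)
    then have "z = n * int N" by (metis of_int_eq_iff of_int_mult of_int_of_nat_eq)
    with False z show False by (cases "n = 0") (auto simp: abs_mult)
  qed
  moreover have "w ^ N = 1"
    unfolding w_def Complex.DeMoivre using N by (simp add: cis_multiple_2pi)
  ultimately show ?thesis using False by (simp add: pw sum_gp_strict)
qed simp

lemma expectation_cis_linear_form: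
  fixes a :: "nat \<Rightarrow> int"
  assumes "finite J" "finite (set_pmf p)"
  shows "measure_pmf.expectation (Pi_pmf J 0 (\<lambda>_. p)) (\<lambda>xi. cis (t * of_int (\<Sum>j\<in>J. a j * xi j)))
       = (\<Prod>j\<in>J. chf p (t * of_int (a j)))"
proof -
  have "cis (t * of_int (\<Sum>j\<in>J. a j * xi j)) = (\<Prod>j\<in>J. cis (t * of_int (a j) * of_int (xi j)))" for xi
    using cis_sum[OF assms(1)] by (simp add: sum_distrib_left mult.assoc)
  then show ?thesis
    using expectation_prod_Pi_pmf_finite[OF assms(1), of "\<lambda>_. p" 0
      "\<lambda>j x. cis (t * of_int (a j) * of_int x)"] assms(2)
    by (simp add: chf_def)
qed

text \<open>Discrete Fourier inversion: the indicator of \<open>X = s\<close> is the average of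
  \<open>cis (2\<pi> l (X - s) / N)\<close> over \<open>l < N\<close>, as long as \<open>|X - s| < N\<close>.\<close>
lemma prob_linear_form_eq_fourier:
  fixes p :: "int pmf" and a :: "nat \<Rightarrow> int" and s :: int and N :: nat
  assumes J: "finite J" and pf: "finite (set_pmf p)" and N: "0 < N"
    and bnd: "\<And>xi. xi \<in> set_pmf (Pi_pmf J 0 (\<lambda>_. p)) \<Longrightarrow> \<bar>(\<Sum>j\<in>J. a j * xi j) - s\<bar> < int N"
  defines "th \<equiv> \<lambda>l::nat. 2 * pi * real l / real N"
  shows "complex_of_real (measure_pmf.prob (Pi_pmf J 0 (\<lambda>_. p)) {xi. (\<Sum>j\<in>J. a j * xi j) = s})
       = (\<Sum>l<N. cis (- th l * real_of_int s) * (\<Prod>j\<in>J. chf p (th l * real_of_int (a j)))) / of_nat N"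
proof -
  define Q where "Q = Pi_pmf J 0 (\<lambda>_. p)"
  define X where "X = (\<lambda>xi::nat\<Rightarrow>int. \<Sum>j\<in>J. a j * xi j)"
  define c where "c = (\<lambda>l. cis (- th l * real_of_int s))"
  have Qf: "finite (set_pmf Q)" unfolding Q_def by (rule finite_set_Pi_pmf) (use J pf in auto)
  have ind: "complex_of_real (indicator {xi. X xi = s} xi) = (\<Sum>l<N. c l * cis (th l * X xi)) / of_nat N"
    if "xi \<in> set_pmf Q" for xi
  proof -
    have "(\<Sum>l<N. c l * cis (th l * X xi)) = (\<Sum>l<N. cis (2 * pi * real l * real_of_int (X xi - s) / real N))"
      by (intro sum.cong refl) (simp add: c_def th_def cis_mult algebra_simps diff_divide_distrib)
    also have "\<dots> = (if X xi - s = 0 then of_nat N else 0)"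
      using bnd that N unfolding Q_def X_def by (intro sum_cis_roots_of_unity) auto
    finally show ?thesis using N by (simp add: indicator_def)
  qed
  have E: "measure_pmf.expectation Q (\<lambda>xi. cis (th l * X xi)) = (\<Prod>j\<in>J. chf p (th l * real_of_int (a j)))"
    for l unfolding Q_def X_def by (rule expectation_cis_linear_form[OF J pf])
  have "complex_of_real (measure_pmf.prob Q {xi. X xi = s})
      = measure_pmf.expectation Q (\<lambda>xi. complex_of_real (indicator {xi. X xi = s} xi))"
    by simp
  also have "\<dots> = measure_pmf.expectation Q (\<lambda>xi. (\<Sum>l<N. c l * cis (th l * X xi)) / of_nat N)"
    by (intro integral_cong_AE AE_pmfI ind) simp_all
  also have "\<dots> = (\<Sum>l<N. c l * measure_pmf.expectation Q (\<lambda>xi. cis (th l * X xi))) / of_nat N"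
    using Qf by (simp add: Bochner_Integration.integral_sum integrable_measure_pmf_finite)
  also have "\<dots> = (\<Sum>l<N. c l * (\<Prod>j\<in>J. chf p (th l * real_of_int (a j)))) / of_nat N"
    by (simp only: E)
  finally show ?thesis unfolding Q_def X_def c_def .
qed

lemma prob_linear_form_eq_le:
  fixes p :: "int pmf" and a :: "nat \<Rightarrow> int" and s :: int and N :: nat
  assumes J: "finite J" and pf: "finite (set_pmf p)" and N: "0 < N"
    and bnd: "\<And>xi. xi \<in> set_pmf (Pi_pmf J 0 (\<lambda>_. p)) \<Longrightarrow> \<bar>(\<Sum>j\<in>J. a j * xi j) - s\<bar> < int N"
  shows "measure_pmf.prob (Pi_pmf J 0 (\<lambda>_. p)) {xi. (\<Sum>j\<in>J. a j * xi j) = s}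
         \<le> (\<Sum>l<N. \<Prod>j\<in>J. cmod (chf p (2 * pi * real l / real N * real_of_int (a j)))) / real N"
proof -
  let ?P = "measure_pmf.prob (Pi_pmf J 0 (\<lambda>_. p)) {xi. (\<Sum>j\<in>J. a j * xi j) = s}"
  have "?P = cmod (complex_of_real ?P)" by simp
  also have "\<dots> = cmod (\<Sum>l<N. cis (- (2 * pi * real l / real N) * real_of_int s)
      * (\<Prod>j\<in>J. chf p (2 * pi * real l / real N * real_of_int (a j)))) / real N"
    by (simp only: prob_linear_form_eq_fourier[OF J pf N bnd] norm_divide) simp
  also have "\<dots> \<le> (\<Sum>l<N. \<Prod>j\<in>J. cmod (chf p (2 * pi * real l / real N * real_of_int (a j)))) / real N"
    by (intro divide_right_mono order.trans[OF norm_sum]) (simp_all add: norm_mult prod_norm)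
  finally show ?thesis .
qed

section \<open>Anti-concentration along arithmetic progressions\<close>

lemma prod_superset_le_of_le_one:
  fixes f :: "'a \<Rightarrow> real"
  assumes "finite B" "A \<subseteq> B" "\<And>x. x \<in> B \<Longrightarrow> 0 \<le> f x" "\<And>x. x \<in> B \<Longrightarrow> f x \<le> 1"
  shows "(\<Prod>x\<in>B. f x) \<le> (\<Prod>x\<in>A. f x)"
proof -
  have "(\<Prod>x\<in>B. f x) = (\<Prod>x\<in>B - A. f x) * (\<Prod>x\<in>A. f x)"
    by (rule prod.subset_diff) (use assms in auto)
  also have "\<dots> \<le> 1 * (\<Prod>x\<in>A. f x)"
    by (intro mult_right_mono prod_le_1 prod_nonneg) (use assms in auto)
  finally show ?thesis by simp
qed

lemma sin_squared_add_multiple_pi: "sin (y + real n * pi)^2 = sin y^2"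
  by (simp add: sin_add power_mult_distrib power2_eq_square flip: power_mult_distrib)

lemma sin_squared_multiple_pi_diff: "sin (real n * pi - y)^2 = sin y^2"
  by (simp add: sin_diff power_mult_distrib power2_eq_square flip: power_mult_distrib)

lemma sin_squared_multiple_fold:
  fixes g l M :: nat
  assumes M: "0 < M"
  shows "sin (real g * (pi * real l / real M))^2
       = sin (real g * (pi * real (min (l mod M) (M - l mod M)) / real M))^2"
proof -
  define r where "r = l mod M"
  have "real l = real (l div M) * real M + real r"
    unfolding r_def by (metis of_nat_add of_nat_mult div_mult_mod_eq)
  then have "real g * (pi * real l / real M) = real g * (pi * real r / real M) + real (g * (l div M)) * pi"
    using M by (simp add: field_simps)
  then have fold: "sin (real g * (pi * real l / real M))^2 = sin (real g * (pi * real r / real M))^2"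
    by (simp only: sin_squared_add_multiple_pi)
  show ?thesis
  proof (cases "r \<le> M - r")
    case True
    then have "min (l mod M) (M - l mod M) = r" unfolding r_def by simp
    with fold show ?thesis by (simp only:)
  next
    case False
    then have min: "min (l mod M) (M - l mod M) = M - r" unfolding r_def by simp
    have "r < M" unfolding r_def using M by simp
    then have "real g * (pi * real (M - r) / real M) = real g * pi - real g * (pi * real r / real M)"
      using M by (simp add: of_nat_diff field_simps)
    then show ?thesis unfolding min fold by (simp only: sin_squared_multiple_pi_diff)
  qed
qed

lemma abs_weighted_sum_le:
  assumes supp: "set_pmf p \<subseteq> {-1, 0, 1}" and J: "finite J"
    and xi: "xi \<in> set_pmf (Pi_pmf J 0 (\<lambda>_. p))"
  shows "\<bar>\<Sum>j\<in>J. int j * xi j\<bar> \<le> int (\<Sum>J)"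
proof -
  have "\<bar>xi j\<bar> \<le> 1" if "j \<in> J" for j
    using xi J that supp by (auto simp: set_Pi_pmf PiE_dflt_def)
  then have "\<bar>int j * xi j\<bar> \<le> int j" if "j \<in> J" for j
    using that mult_left_mono[of "\<bar>xi j\<bar>" 1 "int j"] by (simp add: abs_mult)
  then have "\<bar>\<Sum>j\<in>J. int j * xi j\<bar> \<le> (\<Sum>j\<in>J. int j)"
    by (intro order.trans[OF sum_abs] sum_mono)
  then show ?thesis by simp
qed

text \<open>The hypothesis \<open>eq\<close> says that \<open>th * k \<equiv> \<plusminus>d (mod \<pi>)\<close>.\<close>
lemma prod_norm_chf_progression_le:
  fixes J :: "nat set" and k m c :: nat
  assumes gam: "0 < gam" and chfb: "\<And>t. cmod (chf p t) \<le> exp (- gam * sin t ^ 2)"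
    and J: "finite J" and k: "1 \<le> k" and m: "4 \<le> m"
    and AP: "\<And>i. i < m \<Longrightarrow> c + i * k \<in> J"
    and d: "0 \<le> d" "d \<le> pi / 2" and eq: "\<And>g::nat. sin (real g * (th * real k))^2 = sin (real g * d)^2"
  shows "(\<Prod>j\<in>J. cmod (chf p (th * real j)))
       \<le> exp (- gam * (real m ^ 3 * d^2 / 288)) + exp (- gam * (real m / 32))"
proof -
  have le1: "cmod (chf p t) \<le> 1" for t
  proof -
    have "- gam * sin t ^ 2 \<le> 0" using gam by simp
    then show ?thesis using chfb[of t] by (meson order.trans exp_le_one_iff)
  qed
  have "(\<Prod>j\<in>J. cmod (chf p (th * real j)))
      \<le> (\<Prod>j\<in>(\<lambda>i. c + i * k) ` {..<m}. cmod (chf p (th * real j)))"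
    by (rule prod_superset_le_of_le_one[OF J]) (use AP le1 in auto)
  also have "\<dots> = (\<Prod>i<m. cmod (chf p (th * real (c + i * k))))"
    using k by (subst prod.reindex) (auto simp: inj_on_def)
  also have "\<dots> \<le> (\<Prod>i<m. exp (- gam * sin (th * real (c + i * k)) ^ 2))"
    by (intro prod_mono conjI chfb) simp
  also have "\<dots> = exp (- gam * (\<Sum>i<m. sin (th * real c + real i * (th * real k)) ^ 2))"
    by (simp add: exp_sum sum_distrib_left algebra_simps)
  also have "\<dots> \<le> exp (- gam * min (real m ^ 3 * d^2 / 288) (real m / 32))"
    using sum_sin_squared_progression_ge[OF m d eq] gam by simp
  also have "\<dots> \<le> exp (- gam * (real m ^ 3 * d^2 / 288)) + exp (- gam * (real m / 32))"
    by (simp add: min_def add_increasing add_increasing2)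
  finally show ?thesis .
qed

definition anticonc_const :: "real \<Rightarrow> real" where
  "anticonc_const gam = 8 + 4 / (pi * sqrt (gam / 288)) + 4096 / gam^2"

lemma anticonc_const_ge: "0 < gam \<Longrightarrow> 8 \<le> anticonc_const gam"
  unfolding anticonc_const_def by (simp add: add_nonneg_nonneg)

lemma anticonc_const_dominates:
  fixes m M :: nat
  assumes gam: "0 < gam" and m: "4 \<le> m" and M: "m^2 \<le> M"
  defines "a \<equiv> (pi * (real m * sqrt (real m)) / real M)^2 * (gam / 288)"
  shows "4 * (1 + 1 / sqrt a) / real M + exp (- gam * (real m / 32))
       \<le> anticonc_const gam / (real m * sqrt (real m))"
proof -
  define w where "w = real m * sqrt (real m)"
  define sg where "sg = sqrt (gam / 288)"
  have w0: "0 < w" unfolding w_def using m by simp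
  have sg0: "0 < sg" unfolding sg_def using gam by simp
  have "sqrt (real m) \<le> sqrt (real m ^ 2)"
    using m by (intro real_sqrt_le_mono) (simp add: power2_eq_square)
  then have "sqrt (real m) \<le> real m" by simp
  then have wm: "w \<le> real m * real m" unfolding w_def by (intro mult_left_mono) auto
  also have "\<dots> \<le> real M" using M by (metis of_nat_le_iff of_nat_mult power2_eq_square)
  finally have wM: "w \<le> real M" .
  have M0: "0 < real M" using wM w0 by simp
  have "sqrt a = sqrt ((pi * w / real M)^2) * sg"
    unfolding a_def w_def sg_def by (rule real_sqrt_mult)
  also have "sqrt ((pi * w / real M)^2) = pi * w / real M" using w0 M0 by simp
  finally have sa: "sqrt a = pi * w * sg / real M" by simp
  have "4 * (1 + 1 / sqrt a) / real M = 4 / real M + 4 / (pi * sg) / w"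
    unfolding sa using M0 w0 sg0 by (simp add: field_simps)
  moreover have "4 / real M \<le> 4 / w" using w0 wM by (intro divide_left_mono) auto
  ultimately have gauss: "4 * (1 + 1 / sqrt a) / real M \<le> 4 / w + 4 / (pi * sg) / w"
    by linarith
  have "exp (- gam * (real m / 32)) \<le> 4 / (gam * (real m / 32))^2"
    using exp_neg_le_four_div_square[of "gam * (real m / 32)"] gam m by simp
  also have "\<dots> = 4096 / gam^2 / (real m * real m)" by (simp add: power2_eq_square field_simps)
  also have "\<dots> \<le> 4096 / gam^2 / w" using w0 wm gam by (intro divide_left_mono) auto
  finally have "4 * (1 + 1 / sqrt a) / real M + exp (- gam * (real m / 32))
      \<le> (4 + 4 / (pi * sg) + 4096 / gam^2) / w"
    using gauss by (simp add: add_divide_distrib)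
  also have "\<dots> \<le> anticonc_const gam / w"
    unfolding anticonc_const_def sg_def using w0 by (intro divide_right_mono) auto
  finally show ?thesis unfolding w_def .
qed

text \<open>At the frequency \<open>2\<pi> l / N\<close> with \<open>N = 2 k M\<close>, the common difference \<open>k\<close> of the
  progression turns into the angle \<open>\<pi> l / M\<close>.\<close>
lemma prod_norm_chf_frequency_le:
  fixes J :: "nat set" and k m c M l :: nat
  assumes gam: "0 < gam" and chfb: "\<And>t. cmod (chf p t) \<le> exp (- gam * sin t ^ 2)"
    and J: "finite J" and k: "1 \<le> k" and m: "4 \<le> m"
    and AP: "\<And>i. i < m \<Longrightarrow> c + i * k \<in> J" and M: "0 < M"
  defines "a \<equiv> (pi * (real m * sqrt (real m)) / real M)^2 * (gam / 288)"
  shows "(\<Prod>j\<in>J. cmod (chf p (2 * pi * real l / real (2 * k * M) * real j)))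
       \<le> exp (- a * real (min (l mod M) (M - l mod M)) ^ 2) + exp (- gam * (real m / 32))"
proof -
  define d where "d = pi * real (min (l mod M) (M - l mod M)) / real M"
  have d: "0 \<le> d" "d \<le> pi / 2" unfolding d_def using M by (auto simp: field_simps)
  have "2 * pi * real l / real (2 * k * M) * real k = pi * real l / real M"
    using k by (simp add: field_simps)
  then have "sin (real g * (2 * pi * real l / real (2 * k * M) * real k))^2 = sin (real g * d)^2" for g
    unfolding d_def using sin_squared_multiple_fold[OF M] by simp
  from prod_norm_chf_progression_le[OF gam chfb J k m AP d this]
  have "(\<Prod>j\<in>J. cmod (chf p (2 * pi * real l / real (2 * k * M) * real j)))
      \<le> exp (- gam * (real m ^ 3 * d^2 / 288)) + exp (- gam * (real m / 32))" .
  also have "exp (- gam * (real m ^ 3 * d^2 / 288)) = exp (- a * real (min (l mod M) (M - l mod M)) ^ 2)"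
    unfolding a_def d_def using M m
    by (simp add: power_mult_distrib power_divide power3_eq_cube power2_eq_square field_simps)
  finally show ?thesis .
qed

text \<open>Fourier inversion with the modulus \<open>N = 2 k M\<close>; averaging the Gaussian bound of
  \<open>prod_norm_chf_frequency_le\<close> over the frequencies gains the factor \<open>m\<^sup>-\<^sup>3\<^sup>/\<^sup>2\<close>.\<close>
lemma prob_weighted_sum_eq_le_progression_large:
  fixes p :: "int pmf" and J :: "nat set" and k m c :: nat and s :: int
  assumes supp: "set_pmf p \<subseteq> {-1, 0, 1}" and gam: "0 < gam"
    and chfb: "\<And>t. cmod (chf p t) \<le> exp (- gam * sin t ^ 2)"
    and J: "finite J" and k: "1 \<le> k" and m: "4 \<le> m"
    and AP: "\<And>i. i < m \<Longrightarrow> c + i * k \<in> J"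
  shows "measure_pmf.prob (Pi_pmf J 0 (\<lambda>_. p)) {xi. (\<Sum>j\<in>J. int j * xi j) = s}
         \<le> anticonc_const gam / (real m * sqrt (real m))"
proof -
  \<comment> \<open>\<open>M\<close> must exceed \<open>m\<^sup>2\<close> and the range of \<open>\<Sum>\<^sub>j j \<xi>\<^sub>j - s\<close>.\<close>
  define M :: nat where "M = m^2 + \<Sum>J + nat \<bar>s\<bar> + 1"
  define N :: nat where "N = 2 * k * M"
  define a where "a = (pi * (real m * sqrt (real m)) / real M)^2 * (gam / 288)"
  define A where "A = (\<lambda>r::nat. exp (- a * real (min r (M - r)) ^ 2))"
  define E2 where "E2 = exp (- gam * (real m / 32))"
  have M0: "0 < M" and N0: "0 < N" using k by (simp_all add: M_def N_def)
  have MN: "M \<le> N" unfolding N_def using k mult_le_mono1[of 1 "2 * k" M] by simp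
  have a0: "0 < a" unfolding a_def using gam m M0 by simp
  have pf: "finite (set_pmf p)" using supp finite_subset by blast
  have "\<bar>(\<Sum>j\<in>J. int j * xi j) - s\<bar> < int N" if "xi \<in> set_pmf (Pi_pmf J 0 (\<lambda>_. p))" for xi
  proof -
    have "int M = int (m^2) + int (\<Sum>J) + \<bar>s\<bar> + 1" unfolding M_def by simp
    then show ?thesis
      using abs_weighted_sum_le[OF supp J that] abs_triangle_ineq4[of "\<Sum>j\<in>J. int j * xi j" s] MN
      by linarith
  qed
  then have "measure_pmf.prob (Pi_pmf J 0 (\<lambda>_. p)) {xi. (\<Sum>j\<in>J. int j * xi j) = s}
      \<le> (\<Sum>l<N. \<Prod>j\<in>J. cmod (chf p (2 * pi * real l / real N * real_of_int (int j)))) / real N"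
    by (rule prob_linear_form_eq_le[OF J pf N0])
  also have "\<dots> \<le> (\<Sum>l<N. A (l mod M) + E2) / real N"
    using prod_norm_chf_frequency_le[OF gam chfb J k m AP M0]
    unfolding A_def E2_def a_def N_def by (intro divide_right_mono sum_mono) simp_all
  also have "\<dots> = (\<Sum>r<M. A r) / real M + E2"
    using sum_lessThan_mult_mod[where f = A and q = "2 * k" and M = M] k M0
    by (simp add: sum.distrib N_def field_simps)
  also have "\<dots> \<le> 4 * (1 + 1 / sqrt a) / real M + E2"
    using sum_gaussian_folded_le[OF a0, of M] M0 unfolding A_def by (simp add: divide_right_mono)
  also have "\<dots> \<le> anticonc_const gam / (real m * sqrt (real m))"
    unfolding a_def E2_def by (rule anticonc_const_dominates[OF gam m]) (simp add: M_def)
  finally show ?thesis .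
qed

lemma prob_weighted_sum_eq_le_progression:
  fixes p :: "int pmf" and J :: "nat set" and k m c :: nat and s :: int
  assumes supp: "set_pmf p \<subseteq> {-1, 0, 1}" and gam: "0 < gam"
    and chfb: "\<And>t. cmod (chf p t) \<le> exp (- gam * sin t ^ 2)"
    and J: "finite J" and k: "1 \<le> k" and m: "1 \<le> m"
    and AP: "\<And>i. i < m \<Longrightarrow> c + i * k \<in> J"
  shows "measure_pmf.prob (Pi_pmf J 0 (\<lambda>_. p)) {xi. (\<Sum>j\<in>J. int j * xi j) = s}
         \<le> anticonc_const gam / (real m * sqrt (real m))"
proof (cases "4 \<le> m")
  case True
  then show ?thesis by (rule prob_weighted_sum_eq_le_progression_large[OF supp gam chfb J k _ AP])
next
  case False
  have "sqrt (real m) \<le> sqrt (2^2)" using False by (intro real_sqrt_le_mono) simp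
  then have "sqrt (real m) \<le> 2" by simp
  then have "real m * sqrt (real m) \<le> 4 * 2" using False by (intro mult_mono) auto
  then have "1 \<le> 8 / (real m * sqrt (real m))" using m by simp
  also have "\<dots> \<le> anticonc_const gam / (real m * sqrt (real m))"
    using anticonc_const_ge[OF gam] m by (intro divide_right_mono) auto
  finally show ?thesis using measure_pmf.prob_le_1 order.trans by blast
qed

section \<open>The derivative at roots of unity\<close>

lemma alg_deg_le_of_power_eq_one:
  fixes \<alpha> :: complex
  assumes k: "1 \<le> k" and ak: "\<alpha> ^ k = 1"
  shows "alg_deg \<alpha> \<le> k"
proof -
  define q :: "rat poly" where "q = monom 1 k - 1"
  have "map_poly (of_rat :: rat \<Rightarrow> complex) q = monom 1 k - 1"
    by (rule poly_eqI) (simp add: q_def coeff_map_poly coeff_monom coeff_1 of_rat_diff if_distrib cong: if_cong)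
  then have root: "poly (map_poly of_rat q) \<alpha> = 0" using ak by (simp add: poly_monom)
  have "degree q = degree (monom (1::rat) k + (-1))" unfolding q_def by simp
  also have "\<dots> = k"
    using k by (subst degree_add_eq_left) (simp_all add: degree_monom_eq)
  finally have "degree q = k" .
  with k have "q \<noteq> 0" by auto
  with root \<open>degree q = k\<close> show ?thesis
    unfolding alg_deg_def by (intro Least_le) blast
qed

lemma int_combination_powers_eq_zero:
  fixes \<alpha> :: complex and D :: "nat \<Rightarrow> int"
  assumes sum0: "(\<Sum>r<d. of_int (D r) * \<alpha> ^ r) = 0" and d: "d \<le> alg_deg \<alpha>" and r: "r < d"
  shows "D r = 0"
proof -
  define q :: "rat poly" where "q = (\<Sum>r<d. monom (of_int (D r)) r)"
  have "map_poly (of_rat :: rat \<Rightarrow> complex) q = (\<Sum>r<d. monom (of_int (D r)) r)"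
    by (rule poly_eqI)
       (simp add: q_def coeff_map_poly coeff_sum of_rat_sum coeff_monom if_distrib cong: if_cong)
  then have root: "poly (map_poly of_rat q) \<alpha> = 0"
    using sum0 by (simp add: poly_sum poly_monom)
  have "q = 0"
  proof (rule ccontr)
    assume "q \<noteq> 0"
    with root have "alg_deg \<alpha> \<le> degree q"
      unfolding alg_deg_def by (intro Least_le) blast
    moreover have "degree q \<le> d - 1" unfolding q_def
      by (rule degree_sum_le) (auto intro: order.trans[OF degree_monom_le])
    ultimately show False using d r by linarith
  qed
  moreover have "coeff q r = of_int (D r)" unfolding q_def by (simp add: coeff_sum coeff_monom r)
  ultimately show ?thesis by simp
qed

lemma power_mod_of_power_eq_one:
  fixes \<alpha> :: "'a::monoid_mult"
  assumes "\<alpha> ^ k = 1"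
  shows "\<alpha> ^ m = \<alpha> ^ (m mod k)"
proof -
  have "\<alpha> ^ m = \<alpha> ^ (k * (m div k) + m mod k)" by simp
  also have "\<dots> = (\<alpha> ^ k) ^ (m div k) * \<alpha> ^ (m mod k)" by (simp only: power_add power_mult)
  finally show ?thesis using assms by simp
qed

text \<open>Indices are grouped by the exponent \<open>j - 1\<close> of \<open>\<alpha>\<close> in the term \<open>j \<xi>\<^sub>j \<alpha>\<^sup>j\<^sup>-\<^sup>1\<close>
  of \<open>P'(\<alpha>)\<close>.\<close>
definition residue_block :: "nat \<Rightarrow> nat \<Rightarrow> nat \<Rightarrow> nat set" where
  "residue_block n k r = {j \<in> {1..n}. (j - 1) mod k = r}"

definition block_sum :: "nat \<Rightarrow> nat \<Rightarrow> nat \<Rightarrow> (nat \<Rightarrow> int) \<Rightarrow> int" where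
  "block_sum n k r xi = (\<Sum>j\<in>residue_block n k r. int j * xi j)"

lemma poly_pderiv_rand_poly:
  "poly (pderiv (rand_poly n xi)) \<alpha> = (\<Sum>j\<le>n. of_nat j * of_int (xi j) * \<alpha> ^ (j - 1))"
  using higher_pderiv_sum[of 1 "\<lambda>j. monom (of_int (xi j) :: complex) j" "{..n}"]
  by (simp add: rand_poly_def poly_sum pderiv_monom poly_monom)

lemma poly_pderiv_rand_poly_root_of_unity:
  fixes \<alpha> :: complex
  assumes ak: "\<alpha> ^ k = 1" and k: "0 < k"
  shows "poly (pderiv (rand_poly n xi)) \<alpha> = (\<Sum>r<k. of_int (block_sum n k r xi) * \<alpha> ^ r)"
proof -
  have "poly (pderiv (rand_poly n xi)) \<alpha> = (\<Sum>j\<in>{1..n}. of_nat j * of_int (xi j) * \<alpha> ^ (j - 1))"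
    unfolding poly_pderiv_rand_poly by (intro sum.mono_neutral_right) auto
  also have "\<dots> = (\<Sum>j\<in>{1..n}. of_nat j * of_int (xi j) * \<alpha> ^ ((j - 1) mod k))"
  proof (rule sum.cong[OF refl])
    fix j
    show "of_nat j * of_int (xi j) * \<alpha> ^ (j - 1) = of_nat j * of_int (xi j) * \<alpha> ^ ((j - 1) mod k)"
      using power_mod_of_power_eq_one[OF ak, of "j - 1"] by simp
  qed
  also have "\<dots> = (\<Sum>r<k. \<Sum>j\<in>residue_block n k r. of_nat j * of_int (xi j) * \<alpha> ^ r)"
    unfolding residue_block_def using k
    by (subst sum.group[symmetric, where g = "\<lambda>j. (j - 1) mod k" and T = "{..<k}"])
       (auto intro!: sum.cong)
  also have "\<dots> = (\<Sum>r<k. of_int (block_sum n k r xi) * \<alpha> ^ r)"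
    by (simp add: block_sum_def sum_distrib_right)
  finally show ?thesis .
qed

lemma block_sums_eq_of_pderiv_roots:
  fixes \<alpha> :: complex
  assumes ak: "\<alpha> ^ k = 1" and k: "0 < k"
    and root: "poly (pderiv (rand_poly n xi)) \<alpha> = 0" and root': "poly (pderiv (rand_poly n xi')) \<alpha> = 0"
    and agree: "\<forall>j. j \<notin> (\<Union>r<alg_deg \<alpha>. residue_block n k r) \<longrightarrow> xi j = xi' j"
  shows "\<forall>r<alg_deg \<alpha>. block_sum n k r xi = block_sum n k r xi'"
proof -
  define d where "d = alg_deg \<alpha>"
  define D where "D = (\<lambda>r. block_sum n k r xi - block_sum n k r xi')"
  have dk: "d \<le> k" unfolding d_def using ak k by (intro alg_deg_le_of_power_eq_one) auto
  have "D r = 0" if "d \<le> r" for r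
  proof -
    have "j \<notin> residue_block n k r'" if "j \<in> residue_block n k r" "r' < d" for j r'
      using that \<open>d \<le> r\<close> by (auto simp: residue_block_def)
    then show ?thesis using agree by (auto simp: D_def d_def block_sum_def intro!: sum.cong)
  qed
  then have "(\<Sum>r<d. of_int (D r) * \<alpha> ^ r) = (\<Sum>r<k. of_int (D r) * \<alpha> ^ r)"
    using dk by (intro sum.mono_neutral_left) auto
  also have "\<dots> = 0"
    using root root' unfolding poly_pderiv_rand_poly_root_of_unity[OF ak k]
    by (simp add: D_def algebra_simps sum_subtractf)
  finally show ?thesis
    using int_combination_powers_eq_zero[where D = D and d = d] unfolding D_def d_def by auto
qed

lemma prob_pderiv_root_of_unity_le:
  fixes p :: "int pmf" and \<alpha> :: complex and k n :: nat
  assumes supp: "set_pmf p \<subseteq> {-1, 0, 1}" and gam: "0 < gam"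
    and chfb: "\<And>t. cmod (chf p t) \<le> exp (- gam * sin t ^ 2)"
    and k: "1 \<le> k" and ak: "\<alpha> ^ k = 1" and kn: "k \<le> n"
  shows "measure_pmf.prob (Pi_pmf {0..n} 0 (\<lambda>_. p)) {xi. poly (pderiv (rand_poly n xi)) \<alpha> = 0}
         \<le> (anticonc_const gam / (real (n div k) * sqrt (real (n div k)))) ^ alg_deg \<alpha>"
proof -
  define m where "m = n div k"
  have m: "1 \<le> m" unfolding m_def using div_le_mono[OF kn, of k] k by simp
  have dk: "alg_deg \<alpha> \<le> k" by (rule alg_deg_le_of_power_eq_one[OF k ak])
  have "measure_pmf.prob (Pi_pmf {0..n} 0 (\<lambda>_. p)) {xi. poly (pderiv (rand_poly n xi)) \<alpha> = 0}
      \<le> (\<Prod>r<alg_deg \<alpha>. anticonc_const gam / (real m * sqrt (real m)))"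
  proof (rule prob_Pi_pmf_le_prod_blocks[where I = "residue_block n k" and S = "block_sum n k"])
    show "finite (set_pmf p)" using supp finite_subset by blast
    show "disjoint_family_on (residue_block n k) {..<alg_deg \<alpha>}"
      by (auto simp: disjoint_family_on_def residue_block_def)
    show "measure_pmf.prob (Pi_pmf (residue_block n k r) 0 (\<lambda>_. p)) {f. block_sum n k r f = s}
        \<le> anticonc_const gam / (real m * sqrt (real m))" if r: "r < alg_deg \<alpha>" for r s
      unfolding block_sum_def
    proof (rule prob_weighted_sum_eq_le_progression[OF supp gam chfb _ k m])
      fix i assume "i < m"
      have "r + 1 + i * k \<le> (i + 1) * k" using r dk by simp
      also have "\<dots> \<le> m * k" using \<open>i < m\<close> by (intro mult_right_mono) auto
      also have "m * k \<le> n" unfolding m_def by simp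
      finally show "r + 1 + i * k \<in> residue_block n k r"
        using r dk by (auto simp: residue_block_def)
    qed (simp add: residue_block_def)
    show "\<forall>r<alg_deg \<alpha>. block_sum n k r xi = block_sum n k r xi'"
      if "xi \<in> {xi. poly (pderiv (rand_poly n xi)) \<alpha> = 0}" "xi' \<in> {xi. poly (pderiv (rand_poly n xi)) \<alpha> = 0}"
        and "\<forall>j. j \<notin> (\<Union>r<alg_deg \<alpha>. residue_block n k r) \<longrightarrow> xi j = xi' j" for xi xi'
      using that k by (intro block_sums_eq_of_pderiv_roots[OF ak]) auto
  qed (auto simp: residue_block_def block_sum_def intro!: sum.cong)
  then show ?thesis unfolding m_def by simp
qed

lemma power_eq_powr_three_halves:
  fixes K x :: real
  assumes K: "0 < K" and x: "0 < x"
  shows "(K / (x * sqrt x)) ^ d = (K powr (2/3) / x) powr (3 * real d / 2)"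
proof -
  have "x powr (3/2) = x powr (1 + 1/2)" by simp
  also have "\<dots> = x powr 1 * x powr (1/2)" by (rule powr_add)
  also have "\<dots> = x * sqrt x" using x by (simp add: powr_half_sqrt)
  finally have "(K powr (2/3) / x) powr (3/2) = K / (x * sqrt x)"
    using K x by (simp add: powr_divide powr_powr)
  moreover have "(K powr (2/3) / x) powr (3 * real d / 2) = ((K powr (2/3) / x) powr (3/2)) powr real d"
    by (simp add: powr_powr)
  ultimately show ?thesis using K x by (simp add: powr_realpow)
qed

theorem lemma1p4:
  fixes p :: "int pmf"
  assumes supp: "set_pmf p \<subseteq> {-1, 0, 1}"
    and maxp: "\<forall>x\<in>{-1, 0, 1::int}. pmf p x < 1 / sqrt 3"
  shows "\<exists>C>0. \<forall>n \<ge> 1. \<forall>(\<alpha>::complex) (k::nat).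
           k \<ge> 1 \<longrightarrow> \<alpha> ^ k = 1 \<longrightarrow> k \<le> n \<longrightarrow>
           measure_pmf.prob (Pi_pmf {0..n} 0 (\<lambda>_. p))
              {xi. poly (pderiv (rand_poly n xi)) \<alpha> = 0}
           \<le> (C / real (n div k)) powr (3 * real (alg_deg \<alpha>) / 2)"
proof -
  \<comment> \<open>Only \<open>pmf p x < 1\<close>, i.e. that \<open>\<xi>\<^sub>0\<close> is not constant, is used.\<close>
  have "1 / sqrt 3 \<le> (1::real)" by simp
  then have "\<forall>x\<in>{-1, 0, 1::int}. pmf p x < 1"
    using maxp order.strict_trans2 by blast
  then have gam: "0 < chf_decay p" by (rule chf_decay_pos[OF supp])
  define K where "K = anticonc_const (chf_decay p)"
  have K: "0 < K" unfolding K_def using anticonc_const_ge[OF gam] by simp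
  show ?thesis
  proof (intro exI[of _ "K powr (2/3)"] conjI allI impI)
    fix n k :: nat and \<alpha> :: complex
    assume k: "1 \<le> k" and ak: "\<alpha> ^ k = 1" and kn: "k \<le> n"
    then have m: "0 < real (n div k)" by (simp add: div_greater_zero_iff)
    have "measure_pmf.prob (Pi_pmf {0..n} 0 (\<lambda>_. p)) {xi. poly (pderiv (rand_poly n xi)) \<alpha> = 0}
        \<le> (K / (real (n div k) * sqrt (real (n div k)))) ^ alg_deg \<alpha>"
      unfolding K_def by (rule prob_pderiv_root_of_unity_le[OF supp gam norm_chf_le_exp_sin[OF supp] k ak kn])
    also have "\<dots> = (K powr (2/3) / real (n div k)) powr (3 * real (alg_deg \<alpha>) / 2)"
      by (rule power_eq_powr_three_halves[OF K m])
    finally show "measure_pmf.prob (Pi_pmf {0..n} 0 (\<lambda>_. p)) {xi. poly (pderiv (rand_poly n xi)) \<alpha> = 0}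
        \<le> (K powr (2/3) / real (n div k)) powr (3 * real (alg_deg \<alpha>) / 2)" .
  qed (use K in simp)
qed

end
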